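(* Let $P(x)=a_2x^2+a_1x+a_0$ and $R(x)=b_2x^2+b_1x$ be complex polynomials with $a_2,b_2\ne0$. For $n\ge0$ and $\alpha\in\mathbb C$ let $F(n,\alpha)=\prod_{z\in P^{-1}(R^{-n}(\alpha))}z$, the product of the $2^{n+1}$ roots, counted with multiplicity, of $R^{\circ n}(P(z))=\alpha$. Then $F(n,\alpha)=c_{n,1}\alpha+c_{n,0}$ with $c_{n,1}=-\frac{b_2}{(a_2b_2)^{2^n}}$ and $c_{n,0}=\frac{1}{(a_2b_2)^{2^n}}\big(H(n)-\frac{b_1}{2}\big)$, where $H(0)=a_0b_2+\frac{b_1}{2}$ and $H(n)=H(n-1)^2+\frac{b_1(2-b_1)}{4}$ for $n\ge1$.
   Context: $R^{\circ n}$ denotes the $n$-fold composition ($R^{\circ0}=\mathrm{id}$); $R^{-n}(\alpha)$ is the multiset of roots of $R^{\circ n}(w)=\alpha$ and $P^{-1}(S)$ the multiset union of the roots of $P(z)=w$ over $w\in S$. *)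

theory Defs
  imports "HOL-Computational_Algebra.Polynomial" "HOL-Library.Multiset" Complex_Main
begin

definition poly_iter :: "complex poly \<Rightarrow> nat \<Rightarrow> complex poly" where
  "poly_iter R n = ((\<lambda>q. pcompose R q) ^^ n) [:0, 1:]"

definition root_mset :: "complex poly \<Rightarrow> complex multiset" where
  "root_mset p = Abs_multiset (\<lambda>z. if p = 0 then 0 else order z p)"

definition Fprod :: "complex poly \<Rightarrow> complex poly \<Rightarrow> nat \<Rightarrow> complex \<Rightarrow> complex" where
  "Fprod P R n \<alpha> = prod_mset (root_mset (pcompose (poly_iter R n) P - [:\<alpha>:]))"

fun H :: "complex \<Rightarrow> complex \<Rightarrow> complex \<Rightarrow> nat \<Rightarrow> complex" where
  "H a0 b1 b2 0 = a0 * b2 + b1 / 2"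
| "H a0 b1 b2 (Suc n) = (H a0 b1 b2 n)^2 + b1 * (2 - b1) / 4"

end

theory Submission
  imports Defs "HOL-Computational_Algebra.Fundamental_Theorem_Algebra"
begin

text \<open>
  The roots in question are those of \<open>R\<^sup>n \<circ> P - \<alpha>\<close>, a polynomial of even degree \<open>2^(n+1)\<close>,
  so by Vieta their product is its constant term \<open>R\<^sup>n(a\<^sub>0) - \<alpha>\<close> divided by its leading
  coefficient \<open>lc(R\<^sup>n) a\<^sub>2^(2^n)\<close>. Leading coefficients square under iteration, giving
  \<open>b\<^sub>2 lc(R\<^sup>n) = b\<^sub>2^(2^n)\<close>, and the coordinate change \<open>w = b\<^sub>2 u + b\<^sub>1/2\<close> conjugates
  \<open>R\<close> to \<open>w\<^sup>2 + b\<^sub>1(2 - b\<^sub>1)/4\<close>, so \<open>H\<close> is the orbit of \<open>a\<^sub>0\<close> in these coordinates.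
\<close>

lemma root_mset_eq_proots: "root_mset p = proots p"
  by (simp add: root_mset_def proots_def id_def)

lemma prod_mset_uminus:
  "(\<Prod>x\<in>#A. - x) = (-1) ^ size A * prod_mset (A :: 'a::comm_ring_1 multiset)"
  by (induction A) auto

lemma prod_proots_complex:
  fixes p :: "complex poly"
  assumes "p \<noteq> 0"
  shows "prod_mset (proots p) = (-1) ^ degree p * coeff p 0 / lead_coeff p"
proof -
  have "coeff p 0 = poly (smult (lead_coeff p) (\<Prod>x\<in>#proots p. [:-x, 1:])) 0"
    by (simp only: complex_poly_decompose_multiset poly_0_coeff_0)
  also have "\<dots> = lead_coeff p * (\<Prod>x\<in>#proots p. - x)"
    by (simp add: poly_prod_mset)
  finally have "coeff p 0 = lead_coeff p * (-1) ^ degree p * prod_mset (proots p)"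
    by (simp add: prod_mset_uminus size_proots_complex)
  then show ?thesis
    using assms by (simp add: field_simps flip: power_add)
qed

lemma degree_diff_const:
  fixes p :: "'a::ab_group_add poly"
  assumes "degree p > 0"
  shows "degree (p - [:c:]) = degree p"
  using assms degree_add_eq_left[of "[:-c:]" p]
  by (simp add: diff_conv_add_uminus del: add_uminus_conv_diff)

lemma lead_coeff_diff_const:
  fixes p :: "'a::ab_group_add poly"
  assumes "degree p > 0"
  shows "lead_coeff (p - [:c:]) = lead_coeff p"
  using assms by (simp add: degree_diff_const coeff_pCons split: nat.split)

lemma prod_proots_pcompose_diff_const:
  fixes q p :: "complex poly"
  assumes "degree q > 0" and "degree p > 0"
  shows "prod_mset (proots (pcompose q p - [:\<alpha>:])) =
    (-1) ^ (degree q * degree p) * (poly q (coeff p 0) - \<alpha>) / (lead_coeff q * lead_coeff p ^ degree q)"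
proof -
  let ?f = "pcompose q p - [:\<alpha>:]"
  have deg: "degree ?f = degree q * degree p"
    using assms by (simp add: degree_diff_const degree_pcompose)
  have "lead_coeff ?f = lead_coeff (pcompose q p)"
    using assms by (intro lead_coeff_diff_const) (simp add: degree_pcompose)
  also have "\<dots> = lead_coeff q * lead_coeff p ^ degree q"
    using assms by (simp add: lead_coeff_comp)
  finally have lead: "lead_coeff ?f = lead_coeff q * lead_coeff p ^ degree q" .
  have "?f \<noteq> 0"
    using assms deg by (metis degree_0 mult_is_0 not_gr0)
  then have "prod_mset (proots ?f) = (-1) ^ degree ?f * coeff ?f 0 / lead_coeff ?f"
    by (rule prod_proots_complex)
  also have "coeff ?f 0 = poly q (coeff p 0) - \<alpha>"
    by (simp add: pcompose_coeff_0)
  also note lead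
  also note deg
  finally show ?thesis .
qed

lemma poly_iter_Suc: "poly_iter R (Suc n) = pcompose R (poly_iter R n)"
  by (simp add: poly_iter_def)

lemma degree_poly_iter: "degree (poly_iter R n) = degree R ^ n"
  by (induction n) (simp_all add: poly_iter_Suc degree_pcompose poly_iter_def)

lemma lead_coeff_poly_iter_quadratic:
  assumes "degree R = 2"
  shows "lead_coeff R * lead_coeff (poly_iter R n) = lead_coeff R ^ 2 ^ n"
proof (induction n)
  case 0
  then show ?case by (simp add: poly_iter_def)
next
  case (Suc n)
  have "lead_coeff R * lead_coeff (poly_iter R (Suc n)) =
      (lead_coeff R * lead_coeff (poly_iter R n))\<^sup>2"
    using assms by (simp add: poly_iter_Suc lead_coeff_comp degree_poly_iter power2_eq_square)
  then show ?case
    by (simp add: Suc power_mult[symmetric] mult.commute)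
qed

lemma H_eq_poly_iter: "H a0 b1 b2 n = b2 * poly (poly_iter [:0, b1, b2:] n) a0 + b1 / 2"
proof (induction n)
  case 0
  then show ?case by (simp add: poly_iter_def)
next
  case (Suc n)
  define u where "u = poly (poly_iter [:0, b1, b2:] n) a0"
  have "H a0 b1 b2 (Suc n) = (b2 * u + b1 / 2)\<^sup>2 + b1 * (2 - b1) / 4"
    using Suc by (simp add: u_def)
  also have "\<dots> = b2 * (b1 * u + b2 * u * u) + b1 / 2"
    by (simp add: field_simps power2_eq_square)
  also have "b1 * u + b2 * u * u = poly (poly_iter [:0, b1, b2:] (Suc n)) a0"
    by (simp add: u_def poly_iter_Suc poly_pcompose algebra_simps)
  finally show ?case .
qed

theorem lemma5p5:
  fixes a0 a1 a2 b1 b2 :: complex and n :: nat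
  assumes "a2 \<noteq> 0" and "b2 \<noteq> 0"
  defines "P \<equiv> [:a0, a1, a2:]" and "R \<equiv> [:0, b1, b2:]"
  shows "\<exists>c1 c0. (\<forall>\<alpha>. Fprod P R n \<alpha> = c1 * \<alpha> + c0)
     \<and> c1 = - b2 / (a2 * b2) ^ (2 ^ n)
     \<and> c0 = (H a0 b1 b2 n - b1 / 2) / (a2 * b2) ^ (2 ^ n)"
proof -
  let ?I = "poly_iter R n"
  have deg_R: "degree R = 2"
    using assms(2) by (simp add: R_def)
  have deg_I: "degree ?I = 2 ^ n"
    using deg_R by (simp add: degree_poly_iter)
  have lead_I: "b2 * lead_coeff ?I = b2 ^ 2 ^ n"
    using lead_coeff_poly_iter_quadratic[OF deg_R, of n] assms(2) by (simp add: R_def)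
  have H_eq: "H a0 b1 b2 n - b1 / 2 = b2 * poly ?I a0"
    by (simp add: R_def H_eq_poly_iter)
  define D where "D = lead_coeff ?I * a2 ^ 2 ^ n"
  have "D \<noteq> 0"
    using assms lead_I by (auto simp: D_def)
  have Fprod_eq: "Fprod P R n \<alpha> = (poly ?I a0 - \<alpha>) / D" for \<alpha>
    using prod_proots_pcompose_diff_const[of ?I P \<alpha>] assms(1) deg_I
    by (simp add: Fprod_def root_mset_eq_proots P_def D_def power_mult)
  have "(a2 * b2) ^ 2 ^ n = b2 * D"
    using lead_I by (simp add: D_def power_mult_distrib algebra_simps)
  then have "Fprod P R n \<alpha> = - b2 / (a2 * b2) ^ 2 ^ n * \<alpha> + (H a0 b1 b2 n - b1 / 2) / (a2 * b2) ^ 2 ^ n"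
    for \<alpha>
    using \<open>D \<noteq> 0\<close> assms(2) by (simp add: Fprod_eq H_eq field_simps)
  then show ?thesis by blast
qed

end
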